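(* For each $j=1,\dots,m$ let $Y(\mathbf x_j)=\mathbf x_j^\intercal\boldsymbol\beta+\epsilon(\mathbf x_j)$, where $\boldsymbol\beta,\mathbf x_j\in\mathbb R^d$ and $\epsilon(\mathbf x_j)\sim\mathcal N(0,\sigma_j^2)$, with $\epsilon(\mathbf x_1),\dots,\epsilon(\mathbf x_m)$ independent. Let $Y_1(\mathbf x_j),Y_2(\mathbf x_j),\dots$ be independent samples of $Y(\mathbf x_j)$. Let $T$ be a set of random variables independent of $\sum_{\ell=1}^nY_\ell(\mathbf x_j)$ and of $\{Y_\ell(\mathbf x_j):\ell\ge n+1\}$ for all $j=1,\dots,m$. Suppose each $N_j\ge n$ is an integer-valued function of $T$ and no other random variables. Let $\widehat Y_j=N_j^{-1}\sum_{\ell=1}^{N_j}Y_\ell(\mathbf x_j)$, $\widehat{\mathbf Y}=(\widehat Y_1,\dots,\widehat Y_m)^\intercal$, $\mathcal X=(\mathbf x_1,\dots,\mathbf x_m)^\intercal$ (assume $\mathcal X^\intercal\mathcal X$ is nonsingular), $\widehat{\boldsymbol\beta}=(\mathcal X^\intercal\mathcal X)^{-1}\mathcal X^\intercal\widehat{\mathbf Y}$, and $\Sigma=\mathrm{Diag}(\sigma_1^2/N_1,\dots,\sigma_m^2/N_m)$. Then for any $\mathbf x\in\mathbb R^d$: (i) conditionally on $T$, $\mathbf x^\intercal\widehat{\boldsymbol\beta}\sim\mathcal N\big(\mathbf x^\intercal\boldsymbol\beta,\mathbf x^\intercal(\mathcal X^\intercal\mathcal X)^{-1}\mathcal X^\intercal\Sigma\mathcal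 X(\mathcal X^\intercal\mathcal X)^{-1}\mathbf x\big)$; (ii) $\frac{\mathbf x^\intercal\widehat{\boldsymbol\beta}-\mathbf x^\intercal\boldsymbol\beta}{\sqrt{\mathbf x^\intercal(\mathcal X^\intercal\mathcal X)^{-1}\mathcal X^\intercal\Sigma\mathcal X(\mathcal X^\intercal\mathcal X)^{-1}\mathbf x}}$ is independent of $T$ and has the standard normal distribution. *)

theory Defs
  imports "HOL-Probability.Probability"
begin

definition gaussian :: "real \<Rightarrow> real \<Rightarrow> real measure" where
  "gaussian mu v = (if v = 0 then return borel mu
                    else density lborel (normal_density mu (sqrt v)))"

text \<open>Conditional distribution: conditionally on the random element T (with values in MT),
  the real random variable Z has law K t when T = t, i.e. K composed with T is a regular
  conditional distribution of Z given T:  P(T \<in> A, Z \<in> B) = E[1_A(T) K_T(B)].\<close>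
definition cond_distributed ::
  "'a measure \<Rightarrow> ('a \<Rightarrow> 't) \<Rightarrow> 't measure \<Rightarrow> ('a \<Rightarrow> real) \<Rightarrow> ('t \<Rightarrow> real measure) \<Rightarrow> bool" where
  "cond_distributed M T MT Z K \<longleftrightarrow>
     T \<in> measurable M MT \<and> Z \<in> borel_measurable M \<and>
     (\<forall>A\<in>sets MT. \<forall>B\<in>sets borel.
        emeasure M {\<omega>\<in>space M. T \<omega> \<in> A \<and> Z \<omega> \<in> B}
          = (\<integral>\<^sup>+ \<omega>. indicator A (T \<omega>) * emeasure (K (T \<omega>)) B \<partial>M))"

text \<open>Independence of two random elements with possibly different value spaces
  (the library's indep_var forces both to have the same type); this is indep_vars_def2
  spelled out for two variables.\<close>
definition indep_rv ::
  "'a measure \<Rightarrow> 'b measure \<Rightarrow> ('a \<Rightarrow> 'b) \<Rightarrow> 'c measure \<Rightarrow> ('a \<Rightarrow> 'c) \<Rightarrow> bool" where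
  "indep_rv M MA X MB Z \<longleftrightarrow>
     X \<in> measurable M MA \<and> Z \<in> measurable M MB \<and>
     prob_space.indep_set M {X -` A \<inter> space M | A. A \<in> sets MA}
                            {Z -` B \<inter> space M | B. B \<in> sets MB}"

end

theory Submission
  imports Defs
begin

(* With c = X (X^T X)^-1 z the estimate z^T betahat is the weighted sum of sample means
   sum_j c_j Yhat_j. For fixed sample sizes N_j this is a linear combination of independent
   Gaussians, so it is Gaussian with mean sum_j c_j x_j^T beta = z^T beta (because c^T X = z^T)
   and variance sum_j c_j^2 sigma_j^2 / N_j, which is the sandwich form z^T A X^T Sigma X A z.
   With random sizes N_j = f_j(T) the estimate is Psi(T, G) for a measurable Psi, where
   G = (sum of the first n samples, later samples) is independent of T; Fubini on the product
   of the laws of T and G then shows that conditioning on T just fixes the sizes. After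
   standardization the conditional law no longer depends on T, which yields independence
   of T and the standard normal marginal. *)

lemma (in prob_space) indep_rv_distr_Pair:
  assumes "indep_rv M MT T MG G"
  shows "distr M (MT \<Otimes>\<^sub>M MG) (\<lambda>\<omega>. (T \<omega>, G \<omega>)) = distr M MT T \<Otimes>\<^sub>M distr M MG G"
proof -
  have T: "T \<in> measurable M MT" and G: "G \<in> measurable M MG"
    and indep: "indep_set {T -` A \<inter> space M |A. A \<in> sets MT} {G -` B \<inter> space M |B. B \<in> sets MG}"
    using assms unfolding indep_rv_def by auto
  interpret PT: prob_space "distr M MT T" by (rule prob_space_distr[OF T])
  interpret PG: prob_space "distr M MG G" by (rule prob_space_distr[OF G])
  have TG: "(\<lambda>\<omega>. (T \<omega>, G \<omega>)) \<in> measurable M (MT \<Otimes>\<^sub>M MG)" using T G by measurable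
  show ?thesis
  proof (rule pair_measure_eqI[symmetric])
    show "sigma_finite_measure (distr M MT T)" "sigma_finite_measure (distr M MG G)"
      by (rule prob_space_imp_sigma_finite, unfold_locales)+
    show "sets (distr M MT T \<Otimes>\<^sub>M distr M MG G) = sets (distr M (MT \<Otimes>\<^sub>M MG) (\<lambda>\<omega>. (T \<omega>, G \<omega>)))"
      by (simp cong: sets_pair_measure_cong)
  next
    fix A B assume "A \<in> sets (distr M MT T)" "B \<in> sets (distr M MG G)"
    then have A: "A \<in> sets MT" and B: "B \<in> sets MG" by simp_all
    have "(\<lambda>\<omega>. (T \<omega>, G \<omega>)) -` (A \<times> B) \<inter> space M = (T -` A \<inter> space M) \<inter> (G -` B \<inter> space M)"
      by auto
    moreover have "prob ((T -` A \<inter> space M) \<inter> (G -` B \<inter> space M))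
        = prob (T -` A \<inter> space M) * prob (G -` B \<inter> space M)"
      by (rule indep_setD[OF indep]) (use A B in auto)
    ultimately show "emeasure (distr M MT T) A * emeasure (distr M MG G) B
        = emeasure (distr M (MT \<Otimes>\<^sub>M MG) (\<lambda>\<omega>. (T \<omega>, G \<omega>))) (A \<times> B)"
      using A B by (simp add: emeasure_distr T G TG emeasure_eq_measure ennreal_mult')
  qed
qed

lemma (in prob_space) emeasure_indep_rv_eq_nn_integral:
  assumes ind: "indep_rv M MT T MG G"
    and Psi: "Psi \<in> borel_measurable (MT \<Otimes>\<^sub>M MG)"
    and A: "A \<in> sets MT" and B: "B \<in> sets borel"
  shows "emeasure M {\<omega>\<in>space M. T \<omega> \<in> A \<and> Psi (T \<omega>, G \<omega>) \<in> B}
       = (\<integral>\<^sup>+\<omega>. indicator A (T \<omega>) * emeasure M {\<omega>'\<in>space M. Psi (T \<omega>, G \<omega>') \<in> B} \<partial>M)"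
proof -
  have T: "T \<in> measurable M MT" and G: "G \<in> measurable M MG"
    using ind unfolding indep_rv_def by auto
  let ?PT = "distr M MT T" and ?PG = "distr M MG G"
  interpret PG: prob_space ?PG by (rule prob_space_distr[OF G])
  have TG: "(\<lambda>\<omega>. (T \<omega>, G \<omega>)) \<in> measurable M (MT \<Otimes>\<^sub>M MG)" using T G by measurable
  define E where "E = {p \<in> space (MT \<Otimes>\<^sub>M MG). fst p \<in> A \<and> Psi p \<in> B}"
  have E: "E \<in> sets (MT \<Otimes>\<^sub>M MG)" using Psi A B unfolding E_def by measurable
  then have E': "E \<in> sets (?PT \<Otimes>\<^sub>M ?PG)" by (simp cong: sets_pair_measure_cong)
  have "emeasure M {\<omega>\<in>space M. T \<omega> \<in> A \<and> Psi (T \<omega>, G \<omega>) \<in> B}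
      = emeasure (distr M (MT \<Otimes>\<^sub>M MG) (\<lambda>\<omega>. (T \<omega>, G \<omega>))) E"
    by (subst emeasure_distr[OF TG E])
       (auto intro!: arg_cong[where f="emeasure M"] simp: E_def space_pair_measure
          measurable_space[OF T] measurable_space[OF G])
  also have "\<dots> = emeasure (?PT \<Otimes>\<^sub>M ?PG) E" by (simp add: indep_rv_distr_Pair[OF ind])
  also have "\<dots> = (\<integral>\<^sup>+t. emeasure ?PG (Pair t -` E) \<partial>?PT)"
    by (rule PG.emeasure_pair_measure_alt[OF E'])
  also have "\<dots> = (\<integral>\<^sup>+\<omega>. emeasure ?PG (Pair (T \<omega>) -` E) \<partial>M)"
    by (rule nn_integral_distr[OF T PG.measurable_emeasure_Pair[OF E']])
  also have "\<dots> = (\<integral>\<^sup>+\<omega>. indicator A (T \<omega>) * emeasure M {\<omega>'\<in>space M. Psi (T \<omega>, G \<omega>') \<in> B} \<partial>M)"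
  proof (rule nn_integral_cong)
    fix \<omega> assume "\<omega> \<in> space M"
    then have t: "T \<omega> \<in> space MT" by (rule measurable_space[OF T])
    have "G -` (Pair (T \<omega>) -` E) \<inter> space M
        = (if T \<omega> \<in> A then {\<omega>'\<in>space M. Psi (T \<omega>, G \<omega>') \<in> B} else {})"
      using t measurable_space[OF G] by (auto simp: E_def space_pair_measure)
    then show "emeasure ?PG (Pair (T \<omega>) -` E)
        = indicator A (T \<omega>) * emeasure M {\<omega>'\<in>space M. Psi (T \<omega>, G \<omega>') \<in> B}"
      by (simp add: emeasure_distr[OF G sets_Pair1[OF E]])
  qed
  finally show ?thesis .
qed

lemma (in prob_space) cond_distributed_indep_rv:
  assumes ind: "indep_rv M MT T MG G"
    and Psi: "Psi \<in> borel_measurable (MT \<Otimes>\<^sub>M MG)"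
    and Z: "\<And>\<omega>. \<omega> \<in> space M \<Longrightarrow> Z \<omega> = Psi (T \<omega>, G \<omega>)"
    and slice: "\<And>t. t \<in> space MT \<Longrightarrow> distr M lborel (\<lambda>\<omega>. Psi (t, G \<omega>)) = K t"
  shows "cond_distributed M T MT Z K"
  unfolding cond_distributed_def
proof (intro conjI ballI)
  have T: "T \<in> measurable M MT" and G: "G \<in> measurable M MG"
    using ind unfolding indep_rv_def by auto
  have "(\<lambda>\<omega>. Psi (T \<omega>, G \<omega>)) \<in> borel_measurable M" using T G Psi by measurable
  then show "Z \<in> borel_measurable M" by (rule measurable_cong[THEN iffD1, rotated]) (simp add: Z)
  show "T \<in> measurable M MT" by (rule T)
  fix A and B :: "real set" assume A: "A \<in> sets MT" and B: "B \<in> sets borel"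
  have slice_emeasure: "emeasure M {\<omega>'\<in>space M. Psi (t, G \<omega>') \<in> B} = emeasure (K t) B"
    if t: "t \<in> space MT" for t
  proof -
    have "(\<lambda>\<omega>. Psi (t, G \<omega>)) \<in> borel_measurable M" using t G Psi by measurable
    then show ?thesis
      using B by (simp flip: slice[OF t] add: emeasure_distr vimage_def Int_def conj_commute)
  qed
  have "emeasure M {\<omega>\<in>space M. T \<omega> \<in> A \<and> Z \<omega> \<in> B}
      = emeasure M {\<omega>\<in>space M. T \<omega> \<in> A \<and> Psi (T \<omega>, G \<omega>) \<in> B}"
    by (intro arg_cong[where f="emeasure M"]) (auto simp: Z)
  also have "\<dots> = (\<integral>\<^sup>+\<omega>. indicator A (T \<omega>) * emeasure M {\<omega>'\<in>space M. Psi (T \<omega>, G \<omega>') \<in> B} \<partial>M)"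
    by (rule emeasure_indep_rv_eq_nn_integral[OF ind Psi A B])
  also have "\<dots> = (\<integral>\<^sup>+\<omega>. indicator A (T \<omega>) * emeasure (K (T \<omega>)) B \<partial>M)"
    by (intro nn_integral_cong) (simp add: slice_emeasure measurable_space[OF T])
  finally show "emeasure M {\<omega>\<in>space M. T \<omega> \<in> A \<and> Z \<omega> \<in> B}
      = (\<integral>\<^sup>+\<omega>. indicator A (T \<omega>) * emeasure (K (T \<omega>)) B \<partial>M)" .
qed

lemma (in prob_space) cond_distributed_constD:
  assumes cd: "cond_distributed M T MT Z (\<lambda>_. K)" and K: "sets K = sets borel"
  shows "indep_rv M MT T borel Z" "distr M lborel Z = K"
proof -
  have T: "T \<in> measurable M MT" and Z: "Z \<in> borel_measurable M"
    using cd by (auto simp: cond_distributed_def)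
  have joint: "emeasure M {\<omega>\<in>space M. T \<omega> \<in> A \<and> Z \<omega> \<in> B}
      = emeasure K B * emeasure M (T -` A \<inter> space M)"
    if A: "A \<in> sets MT" and B: "B \<in> sets borel" for A B
  proof -
    have "emeasure M {\<omega>\<in>space M. T \<omega> \<in> A \<and> Z \<omega> \<in> B}
        = (\<integral>\<^sup>+\<omega>. emeasure K B * indicator (T -` A \<inter> space M) \<omega> \<partial>M)"
      using cd A B unfolding cond_distributed_def
      by (auto intro!: nn_integral_cong simp: indicator_def)
    also have "\<dots> = emeasure K B * emeasure M (T -` A \<inter> space M)"
      using measurable_sets[OF T A] by (rule nn_integral_cmult_indicator)
    finally show ?thesis .
  qed
  have marginal: "emeasure M (Z -` B \<inter> space M) = emeasure K B" if B: "B \<in> sets borel" for B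
  proof -
    have "Z -` B \<inter> space M = {\<omega>\<in>space M. T \<omega> \<in> space MT \<and> Z \<omega> \<in> B}"
      using measurable_space[OF T] by auto
    moreover have "T -` space MT \<inter> space M = space M" using measurable_space[OF T] by auto
    ultimately show ?thesis using joint[OF sets.top B] by (simp add: emeasure_space_1)
  qed
  show distr: "distr M lborel Z = K"
  proof (rule measure_eqI)
    fix B assume "B \<in> sets (distr M lborel Z)"
    then show "emeasure (distr M lborel Z) B = emeasure K B"
      using Z by (simp add: emeasure_distr marginal)
  qed (simp add: K)
  show "indep_rv M MT T borel Z"
    unfolding indep_rv_def
  proof (intro conjI indep_setI)
    show "T \<in> measurable M MT" "Z \<in> borel_measurable M" by (fact T, fact Z)
    show "{T -` A \<inter> space M |A. A \<in> sets MT} \<subseteq> events"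
      "{Z -` B \<inter> space M |B. B \<in> sets borel} \<subseteq> events"
      using measurable_sets[OF T] measurable_sets[OF Z] by auto
    fix a b assume "a \<in> {T -` A \<inter> space M |A. A \<in> sets MT}" "b \<in> {Z -` B \<inter> space M |B. B \<in> sets borel}"
    then obtain A B where A: "A \<in> sets MT" and a: "a = T -` A \<inter> space M"
      and B: "B \<in> sets borel" and b: "b = Z -` B \<inter> space M" by auto
    have "a \<inter> b = {\<omega>\<in>space M. T \<omega> \<in> A \<and> Z \<omega> \<in> B}" using a b by auto
    then have "emeasure M (a \<inter> b) = emeasure M a * emeasure M b"
      using joint[OF A B] marginal[OF B] a b by (simp add: mult.commute)
    then show "prob (a \<inter> b) = prob a * prob b"
      by (simp add: emeasure_eq_measure ennreal_mult'[symmetric])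
  qed
qed

lemma (in prob_space) distr_sum_indep_normal:
  assumes I: "finite I" and indep: "indep_vars (\<lambda>_. borel) X I"
    and sigma: "\<And>i. i \<in> I \<Longrightarrow> 0 < \<sigma> i"
    and normal: "\<And>i. i \<in> I \<Longrightarrow> distributed M lborel (X i) (normal_density (\<mu> i) (\<sigma> i))"
  shows "distr M lborel (\<lambda>\<omega>. \<Sum>i\<in>I. a i * X i \<omega>)
       = gaussian (\<Sum>i\<in>I. a i * \<mu> i) (\<Sum>i\<in>I. (a i * \<sigma> i)\<^sup>2)"
proof -
  \<comment> \<open>The library's normal densities need a positive deviation, so null coefficients are dropped.\<close>
  define J where "J = {i\<in>I. a i \<noteq> 0}"
  have J: "finite J" "J \<subseteq> I" using I by (auto simp: J_def)
  have sum_J: "(\<Sum>i\<in>I. a i * h i) = (\<Sum>i\<in>J. a i * h i)" for h :: "_ \<Rightarrow> real"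
    using I by (intro sum.mono_neutral_right) (auto simp: J_def)
  have sum_J2: "(\<Sum>i\<in>I. (a i * \<sigma> i)\<^sup>2) = (\<Sum>i\<in>J. (a i * \<sigma> i)\<^sup>2)"
    using I by (intro sum.mono_neutral_right) (auto simp: J_def)
  show ?thesis
  proof (cases "J = {}")
    case True
    then show ?thesis
      by (simp add: sum_J sum_J2 gaussian_def return_cong[of lborel borel])
  next
    case False
    have "indep_vars (\<lambda>_. borel) (\<lambda>i \<omega>. a i * X i \<omega>) J"
      using indep_vars_subset[OF indep \<open>J \<subseteq> I\<close>]
      by (rule indep_vars_compose2[where Y="\<lambda>i x. a i * x" and N="\<lambda>_. borel"]) measurable
    moreover have "distributed M lborel (\<lambda>\<omega>. a i * X i \<omega>) (normal_density (a i * \<mu> i) (\<bar>a i\<bar> * \<sigma> i))"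
      if "i \<in> J" for i
      using normal_density_affine[OF normal sigma, of i "a i" 0] that by (auto simp: J_def)
    ultimately have "distributed M lborel (\<lambda>\<omega>. \<Sum>i\<in>J. a i * X i \<omega>)
        (normal_density (\<Sum>i\<in>J. a i * \<mu> i) (sqrt (\<Sum>i\<in>J. (\<bar>a i\<bar> * \<sigma> i)\<^sup>2)))"
      using J False sigma by (intro sum_indep_normal) (auto simp: J_def)
    moreover have "0 < (\<Sum>i\<in>J. (a i * \<sigma> i)\<^sup>2)"
      using J False by (intro sum_pos) (auto simp: J_def dest: sigma)
    ultimately show ?thesis
      unfolding sum_J sum_J2
      by (simp add: gaussian_def power_mult_distrib distributed_distr_eq_density)
  qed
qed

definition sample_mean :: "(nat \<Rightarrow> 'a \<Rightarrow> real) \<Rightarrow> nat \<Rightarrow> 'a \<Rightarrow> real" where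
  "sample_mean Y N \<omega> = (\<Sum>l\<in>{1..N}. Y l \<omega>) / real N"

lemma (in prob_space) distr_weighted_sample_means:
  fixes Y :: "'m::finite \<Rightarrow> nat \<Rightarrow> 'a \<Rightarrow> real"
  assumes sigma: "\<And>j. 0 < \<sigma> j"
    and normal: "\<And>j l. l \<ge> 1 \<Longrightarrow> distributed M lborel (Y j l) (normal_density (\<mu> j) (\<sigma> j))"
    and indep: "indep_vars (\<lambda>_. borel) (\<lambda>(j, l). Y j l) (UNIV \<times> {1..})"
    and N: "\<And>j. N j \<ge> 1"
  shows "distr M lborel (\<lambda>\<omega>. \<Sum>j\<in>UNIV. c j * sample_mean (Y j) (N j) \<omega>)
       = gaussian (\<Sum>j\<in>UNIV. c j * \<mu> j) (\<Sum>j\<in>UNIV. (c j)\<^sup>2 * (\<sigma> j)\<^sup>2 / real (N j))"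
proof -
  define I where "I = (SIGMA j:UNIV. {1..N j})"
  define a where "a = (\<lambda>(j, l::nat). c j / real (N j))"
  have sum_I: "(\<Sum>p\<in>I. h p) = (\<Sum>j\<in>UNIV. \<Sum>l\<in>{1..N j}. h (j, l))" for h :: "'m \<times> nat \<Rightarrow> real"
    using sum.Sigma[of UNIV "\<lambda>j. {1..N j}" "\<lambda>j l. h (j, l)"] by (simp add: I_def)
  have N_pos: "N j \<noteq> 0" for j using N[of j] by simp
  have "distr M lborel (\<lambda>\<omega>. \<Sum>p\<in>I. a p * (\<lambda>(j, l). Y j l) p \<omega>)
      = gaussian (\<Sum>p\<in>I. a p * \<mu> (fst p)) (\<Sum>p\<in>I. (a p * \<sigma> (fst p))\<^sup>2)"
  proof (rule distr_sum_indep_normal)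
    show "finite I" unfolding I_def by auto
    show "indep_vars (\<lambda>_. borel) (\<lambda>(j, l). Y j l) I"
      by (rule indep_vars_subset[OF indep]) (auto simp: I_def)
    show "distributed M lborel ((\<lambda>(j, l). Y j l) p) (normal_density (\<mu> (fst p)) (\<sigma> (fst p)))"
      if "p \<in> I" for p
      using that normal by (auto simp: I_def)
  qed (rule sigma)
  moreover have "(\<Sum>p\<in>I. a p * (\<lambda>(j, l). Y j l) p \<omega>) = (\<Sum>j\<in>UNIV. c j * sample_mean (Y j) (N j) \<omega>)"
    for \<omega>
    by (simp add: sum_I a_def sample_mean_def sum_distrib_left sum_divide_distrib)
  moreover have "(\<Sum>p\<in>I. a p * \<mu> (fst p)) = (\<Sum>j\<in>UNIV. c j * \<mu> j)"
    by (simp add: sum_I a_def N_pos)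
  moreover have "(\<Sum>p\<in>I. (a p * \<sigma> (fst p))\<^sup>2) = (\<Sum>j\<in>UNIV. (c j)\<^sup>2 * (\<sigma> j)\<^sup>2 / real (N j))"
    by (simp add: sum_I a_def N_pos power2_eq_square mult_ac)
  ultimately show ?thesis by simp
qed

lemma (in prob_space) distr_standardized_gaussian:
  assumes Z: "Z \<in> borel_measurable M" and law: "distr M lborel Z = gaussian m v" and v: "0 < v"
  shows "distr M lborel (\<lambda>\<omega>. (Z \<omega> - m) / sqrt v) = density lborel std_normal_density"
proof -
  have "distributed M lborel Z (normal_density m (sqrt v))"
    using Z law v by (simp add: distributed_def gaussian_def)
  then have "distributed M lborel (\<lambda>\<omega>. (Z \<omega> - m) / sqrt v) std_normal_density"
    using v by (simp flip: normal_standard_normal_convert)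
  then show ?thesis by (rule distributed_distr_eq_density)
qed

lemma sample_mean_split:
  assumes "n \<le> N"
  shows "sample_mean Y N \<omega> = ((\<Sum>l\<in>{1..n}. Y l \<omega>) + (\<Sum>k\<in>{1..N - n}. Y (n + k) \<omega>)) / real N"
proof -
  obtain p where N: "N = n + p" using assms le_Suc_ex by blast
  have "(\<Sum>l\<in>{1..n + p}. Y l \<omega>) = (\<Sum>l\<in>{1..n}. Y l \<omega>) + (\<Sum>k\<in>{1..p}. Y (n + k) \<omega>)"
    by (induction p) (simp_all add: add.assoc)
  then show ?thesis by (simp add: sample_mean_def N)
qed

lemma (in prob_space) cond_distributed_sample_means_random_size:
  fixes Y :: "'m::finite \<Rightarrow> nat \<Rightarrow> 'a \<Rightarrow> real" and f :: "'m \<Rightarrow> 't \<Rightarrow> nat" and c :: "'m \<Rightarrow> real"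
  assumes sigma: "\<And>j. 0 < \<sigma> j"
    and normal: "\<And>j l. l \<ge> 1 \<Longrightarrow> distributed M lborel (Y j l) (normal_density (\<mu> j) (\<sigma> j))"
    and indep: "indep_vars (\<lambda>_. borel) (\<lambda>(j, l). Y j l) (UNIV \<times> {1..})"
    and n: "n \<ge> 1"
    and T_indep: "indep_rv M MT T (PiM UNIV (\<lambda>_. borel))
          (\<lambda>\<omega>. \<lambda>(j, k). if k = 0 then (\<Sum>l\<in>{1..n}. Y j l \<omega>) else Y j (n + k) \<omega>)"
    and f_meas: "\<And>j. f j \<in> measurable MT (count_space UNIV)"
    and f_ge: "\<And>j t. t \<in> space MT \<Longrightarrow> f j t \<ge> n"
  defines "W \<equiv> \<lambda>\<omega>. \<Sum>j\<in>UNIV. c j * sample_mean (Y j) (f j (T \<omega>)) \<omega>"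
    and "m \<equiv> \<Sum>j\<in>UNIV. c j * \<mu> j"
    and "v \<equiv> \<lambda>t. \<Sum>j\<in>UNIV. (c j)\<^sup>2 * (\<sigma> j)\<^sup>2 / real (f j t)"
  shows "cond_distributed M T MT W (\<lambda>t. gaussian m (v t))"
    and "c \<noteq> (\<lambda>_. 0) \<Longrightarrow>
          indep_rv M MT T borel (\<lambda>\<omega>. (W \<omega> - m) / sqrt (v (T \<omega>)))
        \<and> distributed M lborel (\<lambda>\<omega>. (W \<omega> - m) / sqrt (v (T \<omega>))) std_normal_density"
proof -
  let ?MG = "PiM UNIV (\<lambda>_::'m \<times> nat. borel) :: ('m \<times> nat \<Rightarrow> real) measure"
  \<comment> \<open>The estimator sees the first n samples only through their sum, so it is a function of T and G.\<close>
  define G where "G = (\<lambda>\<omega>. \<lambda>(j, k). if k = 0 then (\<Sum>l\<in>{1..n}. Y j l \<omega>) else Y j (n + k) \<omega>)"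
  define Psi where "Psi = (\<lambda>p::'t \<times> ('m \<times> nat \<Rightarrow> real). \<Sum>j\<in>UNIV.
       c j * (snd p (j, 0) + (\<Sum>k\<in>{1..f j (fst p) - n}. snd p (j, k))) / real (f j (fst p)))"
  have TG: "indep_rv M MT T ?MG G" using T_indep unfolding G_def .
  then have T[measurable]: "T \<in> measurable M MT" and G[measurable]: "G \<in> measurable M ?MG"
    unfolding indep_rv_def by auto
  have f_fst: "(\<lambda>p. f j (fst p)) \<in> measurable (MT \<Otimes>\<^sub>M ?MG) (count_space UNIV)" for j
    using f_meas[of j] by measurable
  have "(\<lambda>p. c j * (snd p (j, 0) + (\<Sum>k\<in>{1..f j (fst p) - n}. snd p (j, k))) / real (f j (fst p)))
      \<in> borel_measurable (MT \<Otimes>\<^sub>M ?MG)" for j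
    by (rule measurable_compose_countable[OF _ f_fst, where
          f="\<lambda>i p. c j * (snd p (j, 0) + (\<Sum>k\<in>{1..i - n}. snd p (j, k))) / real i"]) measurable
  then have Psi_meas[measurable]: "Psi \<in> borel_measurable (MT \<Otimes>\<^sub>M ?MG)"
    unfolding Psi_def by (rule borel_measurable_sum)
  have Psi_G: "Psi (t, G \<omega>) = (\<Sum>j\<in>UNIV. c j * sample_mean (Y j) (f j t) \<omega>)"
    if "t \<in> space MT" for t \<omega>
    using that by (simp add: Psi_def G_def sample_mean_split[OF f_ge])
  have N: "f j t \<ge> 1" if "t \<in> space MT" for j t
    using f_ge[OF that, of j] n by simp
  have slice: "distr M lborel (\<lambda>\<omega>. Psi (t, G \<omega>)) = gaussian m (v t)" if t: "t \<in> space MT" for t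
    unfolding Psi_G[OF t] m_def v_def
    by (rule distr_weighted_sample_means[OF sigma normal indep N[OF t]])
  have W: "W \<omega> = Psi (T \<omega>, G \<omega>)" if "\<omega> \<in> space M" for \<omega>
    using measurable_space[OF T that] by (simp add: W_def Psi_G)
  show "cond_distributed M T MT W (\<lambda>t. gaussian m (v t))"
    by (rule cond_distributed_indep_rv[OF TG Psi_meas W slice])
  assume "c \<noteq> (\<lambda>_. 0)"
  then obtain j0 where "c j0 \<noteq> 0" by auto
  have v_pos: "0 < v t" if "t \<in> space MT" for t
  proof -
    have "0 < (c j0)\<^sup>2 * (\<sigma> j0)\<^sup>2 / real (f j0 t)"
      using \<open>c j0 \<noteq> 0\<close> sigma[of j0] N[OF that, of j0] by simp
    then show ?thesis unfolding v_def by (intro sum_pos2[where i=j0]) auto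
  qed
  have [measurable]: "v \<in> borel_measurable MT"
    unfolding v_def using f_meas by measurable
  define Psi' where "Psi' = (\<lambda>p. (Psi p - m) / sqrt (v (fst p)))"
  have "cond_distributed M T MT (\<lambda>\<omega>. (W \<omega> - m) / sqrt (v (T \<omega>))) (\<lambda>_. density lborel std_normal_density)"
  proof (rule cond_distributed_indep_rv[OF TG])
    show "Psi' \<in> borel_measurable (MT \<Otimes>\<^sub>M ?MG)" unfolding Psi'_def by measurable
    show "(W \<omega> - m) / sqrt (v (T \<omega>)) = Psi' (T \<omega>, G \<omega>)" if "\<omega> \<in> space M" for \<omega>
      using that by (simp add: Psi'_def W)
    show "distr M lborel (\<lambda>\<omega>. Psi' (t, G \<omega>)) = density lborel std_normal_density"
      if t: "t \<in> space MT" for t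
      unfolding Psi'_def fst_conv using slice[OF t] v_pos[OF t] t
      by (intro distr_standardized_gaussian) measurable
  qed
  from cond_distributed_constD[OF this]
  show "indep_rv M MT T borel (\<lambda>\<omega>. (W \<omega> - m) / sqrt (v (T \<omega>)))
      \<and> distributed M lborel (\<lambda>\<omega>. (W \<omega> - m) / sqrt (v (T \<omega>))) std_normal_density"
    by (auto simp: distributed_def indep_rv_def)
qed

lemma matrix_inv_right:
  fixes S :: "'a::semiring_1^'n^'n"
  assumes "invertible S"
  shows "S ** matrix_inv S = mat 1"
  using someI_ex[OF assms[unfolded invertible_def]] unfolding matrix_inv_def by auto

lemma matrix_inv_left:
  fixes S :: "'a::semiring_1^'n^'n"
  assumes "invertible S"
  shows "matrix_inv S ** S = mat 1"
  using someI_ex[OF assms[unfolded invertible_def]] unfolding matrix_inv_def by auto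

lemma transpose_matrix_inv_symmetric:
  fixes S :: "'a::comm_semiring_1^'n^'n"
  assumes S: "invertible S" and sym: "transpose S = S"
  shows "transpose (matrix_inv S) = matrix_inv S"
proof -
  have left_inv: "transpose (matrix_inv S) ** S = mat 1"
    using arg_cong[OF matrix_inv_right[OF S], of transpose] sym
    by (simp add: matrix_transpose_mul)
  have "transpose (matrix_inv S) = transpose (matrix_inv S) ** (S ** matrix_inv S)"
    by (simp add: matrix_inv_right[OF S])
  also have "\<dots> = matrix_inv S"
    by (simp add: matrix_mul_assoc left_inv)
  finally show ?thesis .
qed

lemma inner_matrix_sandwich:
  fixes B :: "real^'m^'n" and D :: "real^'m^'m" and z :: "real^'n"
  shows "z \<bullet> ((B ** D ** transpose B) *v z) = ((z v* B) v* D) \<bullet> (z v* B)"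
proof -
  have "z \<bullet> ((B ** D ** transpose B) *v z) = (z v* (B ** D ** transpose B)) \<bullet> z"
    by (simp only: dot_lmul_matrix)
  also have "z v* (B ** D ** transpose B) = ((z v* B) v* D) v* transpose B"
    by (simp only: vector_matrix_mul_assoc)
  also have "(((z v* B) v* D) v* transpose B) \<bullet> z = ((z v* B) v* D) \<bullet> (z v* B)"
    by (simp only: dot_lmul_matrix transpose_matrix_vector)
  finally show ?thesis .
qed

definition ols_weights :: "real^'d^'m \<Rightarrow> real^'d \<Rightarrow> real^'m" where
  "ols_weights X z = z v* (matrix_inv (transpose X ** X) ** transpose X)"

lemma inner_ols_estimate:
  "z \<bullet> ((matrix_inv (transpose X ** X) ** transpose X) *v y) = ols_weights X z \<bullet> y"
  by (simp only: ols_weights_def dot_lmul_matrix)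

lemma ols_weights_design:
  assumes "invertible (transpose X ** X)"
  shows "ols_weights X z v* X = z"
  using matrix_inv_left[OF assms]
  by (simp add: ols_weights_def vector_matrix_mul_assoc matrix_mul_assoc)

lemma ols_variance_diagonal:
  fixes X :: "real^'d^'m"
  assumes X: "invertible (transpose X ** X)"
  defines "A \<equiv> matrix_inv (transpose X ** X)"
  shows "z \<bullet> ((A ** transpose X ** (\<chi> i k. if i = k then d i else 0) ** X ** A) *v z)
       = (\<Sum>j\<in>UNIV. (ols_weights X z $ j)\<^sup>2 * d j)"
proof -
  let ?B = "A ** transpose X" and ?D = "(\<chi> i k. if i = k then d i else 0) :: real^'m^'m"
  have "transpose A = A"
    unfolding A_def using X
    by (intro transpose_matrix_inv_symmetric) (simp_all add: matrix_transpose_mul)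
  then have "A ** transpose X ** ?D ** X ** A = ?B ** ?D ** transpose ?B"
    by (simp add: matrix_transpose_mul matrix_mul_assoc)
  then have "z \<bullet> ((A ** transpose X ** ?D ** X ** A) *v z) = (ols_weights X z v* ?D) \<bullet> ols_weights X z"
    by (simp add: inner_matrix_sandwich ols_weights_def A_def)
  also have "\<dots> = (\<Sum>j\<in>UNIV. (ols_weights X z $ j)\<^sup>2 * d j)"
    by (simp add: inner_vec_def vector_matrix_mult_def if_distrib power2_eq_square mult_ac cong: if_cong)
  finally show ?thesis .
qed

theorem lemma3:
  fixes M :: "'a measure"
    and Y :: "'m::finite \<Rightarrow> nat \<Rightarrow> 'a \<Rightarrow> real"
    and x :: "'m \<Rightarrow> real^'d"
    and \<beta> :: "real^'d"
    and \<sigma> :: "'m \<Rightarrow> real"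
    and n :: nat
    and T :: "'a \<Rightarrow> 't" and MT :: "'t measure"
    and f :: "'m \<Rightarrow> 't \<Rightarrow> nat"
    and z :: "real^'d"
    and X :: "real^'d^'m" and A :: "real^'d^'d"
    and Yhat :: "'m \<Rightarrow> 'a \<Rightarrow> real" and \<beta>hat :: "'a \<Rightarrow> real^'d"
    and \<Sigma> :: "'t \<Rightarrow> real^'m^'m" and v :: "'t \<Rightarrow> real"
  assumes M: "prob_space M"
    and sigma_pos: "\<And>j. \<sigma> j > 0"
    and Y_normal: "\<And>j l. l \<ge> 1 \<Longrightarrow>
          distributed M lborel (Y j l) (normal_density (x j \<bullet> \<beta>) (\<sigma> j))"
    and Y_indep: "prob_space.indep_vars M (\<lambda>_. borel) (\<lambda>(j, l). Y j l) (UNIV \<times> {1..})"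
    and n_pos: "n \<ge> 1"
    and T_indep: "indep_rv M MT T (PiM UNIV (\<lambda>_. borel))
          (\<lambda>\<omega>. \<lambda>(j, k). if k = 0 then (\<Sum>l\<in>{1..n}. Y j l \<omega>) else Y j (n + k) \<omega>)"
    and f_meas: "\<And>j. f j \<in> measurable MT (count_space UNIV)"
    and f_ge: "\<And>j t. t \<in> space MT \<Longrightarrow> f j t \<ge> n"
    and nonsing: "invertible (transpose (\<chi> j. x j) ** (\<chi> j. x j) :: real^'d^'d)"
    and X_def: "X = (\<chi> j. x j)"
    and A_def: "A = matrix_inv (transpose X ** X)"
    and Yhat_def: "Yhat = (\<lambda>j \<omega>. (\<Sum>l\<in>{1..f j (T \<omega>)}. Y j l \<omega>) / real (f j (T \<omega>)))"
    and \<beta>hat_def: "\<beta>hat = (\<lambda>\<omega>. (A ** transpose X) *v (\<chi> j. Yhat j \<omega>))"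
    and \<Sigma>_def: "\<Sigma> = (\<lambda>t. \<chi> i k. if i = k then (\<sigma> i)\<^sup>2 / real (f i t) else 0)"
    and v_def: "v = (\<lambda>t. z \<bullet> ((A ** transpose X ** \<Sigma> t ** X ** A) *v z))"
  shows "cond_distributed M T MT (\<lambda>\<omega>. z \<bullet> \<beta>hat \<omega>) (\<lambda>t. gaussian (z \<bullet> \<beta>) (v t))
       \<and> (z \<noteq> 0 \<longrightarrow>
            indep_rv M MT T borel
              (\<lambda>\<omega>. (z \<bullet> \<beta>hat \<omega> - z \<bullet> \<beta>) / sqrt (v (T \<omega>)))
          \<and> distributed M lborel (\<lambda>\<omega>. (z \<bullet> \<beta>hat \<omega> - z \<bullet> \<beta>) / sqrt (v (T \<omega>)))
              std_normal_density)"
proof -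
  interpret prob_space M by (rule M)
  define c where "c = ols_weights X z"
  have XX: "invertible (transpose X ** X)" using nonsing by (simp add: X_def)
  have estimate: "z \<bullet> \<beta>hat \<omega> = (\<Sum>j\<in>UNIV. c $ j * sample_mean (Y j) (f j (T \<omega>)) \<omega>)" for \<omega>
    unfolding \<beta>hat_def A_def inner_ols_estimate
    by (simp add: Yhat_def c_def inner_vec_def sample_mean_def)
  have "z \<bullet> \<beta> = c \<bullet> (X *v \<beta>)"
    by (simp add: c_def ols_weights_design[OF XX] flip: dot_lmul_matrix)
  then have mean: "z \<bullet> \<beta> = (\<Sum>j\<in>UNIV. c $ j * (x j \<bullet> \<beta>))"
    by (simp add: X_def inner_vec_def matrix_vector_mult_def)
  have variance: "v t = (\<Sum>j\<in>UNIV. (c $ j)\<^sup>2 * (\<sigma> j)\<^sup>2 / real (f j t))" for t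
    by (simp add: v_def \<Sigma>_def A_def c_def ols_variance_diagonal[OF XX])
  have "(\<lambda>j. c $ j) \<noteq> (\<lambda>_. 0)" if "z \<noteq> 0"
  proof
    assume "(\<lambda>j. c $ j) = (\<lambda>_. 0)"
    then have "c = 0" by (simp add: vec_eq_iff fun_eq_iff)
    then show False using ols_weights_design[OF XX, of z] that by (simp add: c_def)
  qed
  then show ?thesis
    using cond_distributed_sample_means_random_size[where f=f and c="\<lambda>j. c $ j",
        OF sigma_pos Y_normal Y_indep n_pos T_indep f_meas f_ge]
    unfolding estimate mean variance by blast
qed

end
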